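(* Every signified graph $(G,\Sigma)$ whose underlying graph $G$ is outerplanar with girth at least $4$ admits a signified homomorphism to $AT(K_4^* )$, where $K_4^*$ is the complete graph on $4$ vertices with exactly one negative edge.
   Context: A signified graph $(G,\Sigma)$ is a simple graph $G$ with a set $\Sigma\subseteq E(G)$ of negative edges, other edges positive. A signified homomorphism of $(G,\Sigma)$ to $(H,\Lambda)$ is a map $V(G)\to V(H)$ sending every edge to an edge of the same sign. For a signified graph $(H,\Lambda)$, $AT(H,\Lambda)$ has vertex set $\{u_0,u_1:u\in V(H)\}$; for every edge $uv$ of $H$ it has edges $u_0v_0,u_1v_1$ with the sign of $uv$ and $u_0v_1,u_1v_0$ with the opposite sign; no other edges. The girth is the length of a shortest cycle (infinite for forests). *)

theory Defs
  imports Main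
begin

text \<open>A finite simple graph: vertex set V, edge set E of 2-element subsets of V.
  A signified graph additionally has a set Sig of negative edges, Sig a subset of E.\<close>

definition simple_graph :: "'a set \<Rightarrow> 'a set set \<Rightarrow> bool" where
  "simple_graph V E \<longleftrightarrow> finite V \<and> (\<forall>e\<in>E. e \<subseteq> V \<and> card e = 2)"

definition signified_graph :: "'a set \<Rightarrow> 'a set set \<Rightarrow> 'a set set \<Rightarrow> bool" where
  "signified_graph V E Sig \<longleftrightarrow> simple_graph V E \<and> Sig \<subseteq> E"

definition signified_hom ::
  "'a set \<Rightarrow> 'a set set \<Rightarrow> 'a set set \<Rightarrow> 'b set \<Rightarrow> 'b set set \<Rightarrow> 'b set set \<Rightarrow> ('a \<Rightarrow> 'b) \<Rightarrow> bool" where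
  "signified_hom V E Sig W F Lam f \<longleftrightarrow>
     (\<forall>v\<in>V. f v \<in> W) \<and>
     (\<forall>e\<in>E. f ` e \<in> F \<and> (e \<in> Sig \<longleftrightarrow> f ` e \<in> Lam))"

definition is_cycle :: "'a set \<Rightarrow> 'a set set \<Rightarrow> 'a list \<Rightarrow> bool" where
  "is_cycle V E cs \<longleftrightarrow> length cs \<ge> 3 \<and> distinct cs \<and> set cs \<subseteq> V \<and>
     (\<forall>i < length cs. {cs ! i, cs ! ((i + 1) mod length cs)} \<in> E)"

definition girth_at_least :: "'a set \<Rightarrow> 'a set set \<Rightarrow> nat \<Rightarrow> bool" where
  "girth_at_least V E k \<longleftrightarrow> (\<forall>cs. is_cycle V E cs \<longrightarrow> length cs \<ge> k)"

text \<open>Outerplanar: the vertices can be placed in convex position (on a circle, here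
  cut open into a linear order via an injective position map) so that no two edges cross.\<close>
definition outerplanar :: "'a set \<Rightarrow> 'a set set \<Rightarrow> bool" where
  "outerplanar V E \<longleftrightarrow> (\<exists>pos :: 'a \<Rightarrow> nat. inj_on pos V \<and>
     (\<forall>a b c d. {a, b} \<in> E \<longrightarrow> {c, d} \<in> E \<longrightarrow>
        \<not> (pos a < pos c \<and> pos c < pos b \<and> pos b < pos d)))"

text \<open>The construction AT(H, Lam): vertices (u,i) with i a bit; for each edge uv of H,
  edges (u,i)(v,j); sign of uv if i = j, the opposite sign if i differs from j.\<close>
definition AT_vertices :: "'b set \<Rightarrow> ('b \<times> bool) set" where
  "AT_vertices W = W \<times> UNIV"

definition AT_edges :: "'b set set \<Rightarrow> ('b \<times> bool) set set" where
  "AT_edges F = {{(u, i), (v, j)} | u v i j. {u, v} \<in> F}"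

definition AT_neg :: "'b set set \<Rightarrow> 'b set set \<Rightarrow> ('b \<times> bool) set set" where
  "AT_neg F Lam = {{(u, i), (v, j)} | u v i j. {u, v} \<in> F \<and> (({u, v} \<in> Lam) \<noteq> (i \<noteq> j))}"

definition K4_vertices :: "nat set" where "K4_vertices = {0, 1, 2, 3}"
definition K4_edges :: "nat set set" where
  "K4_edges = {{u, v} | u v. u \<in> K4_vertices \<and> v \<in> K4_vertices \<and> u \<noteq> v}"
definition K4_neg :: "nat set set" where "K4_neg = {{0, 1}}"

end

theory Submission
  imports Defs
begin

(* Every triangle-free outerplanar graph has a vertex of degree at most 1 or an edge xy such that
   x has no neighbour besides y and some u, and y none besides x and some w: in the outerplanar
   order take an edge ab spanning a vertex, with b - a minimal. Inside it all edges join consecutive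
   vertices, so the first two inner vertices x, y qualify (with u = a; y = b would give the
   triangle abx). Hence, by induction, a target admits homomorphisms from all such graphs as soon as
   between any two of its vertices there are walks u - x - y - w of length 3 with every prescribed
   triple of signs. In the target AT(H) the layers of x and y can be chosen to give the first two
   edges any signs, and the sign of the third is then governed by the sign of the underlying walk
   of H; for H the signified K4 with one negative edge, walks of length 3 of both signs exist
   between any two vertices. *)

definition neighbours :: "'a set set \<Rightarrow> 'a \<Rightarrow> 'a set" where
  "neighbours E x = {t. {x, t} \<in> E}"

definition triangle_free :: "'a set set \<Rightarrow> bool" where
  "triangle_free E \<longleftrightarrow> (\<forall>a b c. {a, b} \<in> E \<longrightarrow> {b, c} \<in> E \<longrightarrow> {a, c} \<notin> E)"

lemma simple_graph_edgeD:
  assumes "simple_graph V E" "{a, b} \<in> E"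
  shows "a \<in> V" "b \<in> V" "a \<noteq> b"
  using assms unfolding simple_graph_def by (auto simp: card_2_iff)

lemma simple_graph_neighboursD:
  assumes "simple_graph V E" "t \<in> neighbours E x"
  shows "t \<in> V" "t \<noteq> x"
  using simple_graph_edgeD[OF assms(1)] assms(2) unfolding neighbours_def by blast+

lemma simple_graph_edge_at:
  assumes "simple_graph V E" "e \<in> E" "x \<in> e"
  obtains t where "t \<in> neighbours E x" "e = {x, t}"
proof -
  obtain a b where "e = {a, b}"
    using assms unfolding simple_graph_def by (auto simp: card_2_iff)
  with assms(2,3) that show thesis
    unfolding neighbours_def by (auto simp: insert_commute)
qed

lemma simple_graph_induced:
  "simple_graph V E \<Longrightarrow> simple_graph (V - X) {e \<in> E. e \<subseteq> V - X}"
  unfolding simple_graph_def by auto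

lemma outerplanar_induced:
  "outerplanar V E \<Longrightarrow> outerplanar (V - X) {e \<in> E. e \<subseteq> V - X}"
  unfolding outerplanar_def by (blast intro: inj_on_subset)

lemma triangle_free_subset: "triangle_free E \<Longrightarrow> E' \<subseteq> E \<Longrightarrow> triangle_free E'"
  unfolding triangle_free_def by blast

lemma girth_at_least_4_triangle_free:
  assumes "simple_graph V E" "girth_at_least V E 4"
  shows "triangle_free E"
  unfolding triangle_free_def
proof (intro allI impI notI)
  fix a b c assume ab: "{a, b} \<in> E" and bc: "{b, c} \<in> E" and ac: "{a, c} \<in> E"
  have "is_cycle V E [a, b, c]"
    using simple_graph_edgeD[OF assms(1) ab] simple_graph_edgeD[OF assms(1) bc]
      simple_graph_edgeD[OF assms(1) ac] ab bc ac
    unfolding is_cycle_def by (auto simp: less_Suc_eq insert_commute)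
  with assms(2) show False
    unfolding girth_at_least_def by fastforce
qed

definition signed_edge :: "'b set set \<Rightarrow> 'b set set \<Rightarrow> 'b \<Rightarrow> 'b \<Rightarrow> bool \<Rightarrow> bool" where
  "signed_edge F Lam p q s \<longleftrightarrow> {p, q} \<in> F \<and> ({p, q} \<in> Lam \<longleftrightarrow> s)"

definition has_signed_3_walks :: "'b set \<Rightarrow> 'b set set \<Rightarrow> 'b set set \<Rightarrow> bool" where
  "has_signed_3_walks W F Lam \<longleftrightarrow>
     (\<forall>p\<in>W. \<forall>q\<in>W. \<forall>s1 s2 s3. \<exists>x\<in>W. \<exists>y\<in>W.
        signed_edge F Lam p x s1 \<and> signed_edge F Lam x y s2 \<and> signed_edge F Lam y q s3)"

lemma signed_edge_commute: "signed_edge F Lam p q s \<longleftrightarrow> signed_edge F Lam q p s"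
  unfolding signed_edge_def by (simp add: insert_commute)

lemma has_signed_3_walks_signed_edge:
  assumes "has_signed_3_walks W F Lam" "p \<in> W"
  obtains q where "q \<in> W" "signed_edge F Lam p q s"
  using assms unfolding has_signed_3_walks_def by blast

lemma signified_hom_extend:
  assumes G: "simple_graph V E"
    and hom: "signified_hom (V - X) {e \<in> E. e \<subseteq> V - X} Sig W F Lam f"
    and outside: "\<And>v. v \<notin> X \<Longrightarrow> g v = f v"
    and inside: "g ` X \<subseteq> W"
    and edges: "\<And>a b. a \<in> X \<Longrightarrow> b \<in> neighbours E a \<Longrightarrow>
                  signed_edge F Lam (g a) (g b) ({a, b} \<in> Sig)"
  shows "signified_hom V E Sig W F Lam g"
  unfolding signified_hom_def
proof (intro conjI ballI)
  fix v assume "v \<in> V"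
  then show "g v \<in> W"
    using hom inside outside[of v] unfolding signified_hom_def by (cases "v \<in> X") auto
next
  fix e assume e: "e \<in> E"
  have "g ` e \<in> F \<and> (e \<in> Sig \<longleftrightarrow> g ` e \<in> Lam)"
  proof (cases "e \<inter> X = {}")
    case True
    with e G have "e \<in> {e \<in> E. e \<subseteq> V - X}" unfolding simple_graph_def by blast
    moreover have "g ` e = f ` e"
      using True outside by (intro image_cong) auto
    ultimately show ?thesis using hom unfolding signified_hom_def by simp
  next
    case False
    then obtain a where "a \<in> X" "a \<in> e" by blast
    moreover obtain b where "b \<in> neighbours E a" "e = {a, b}"
      using simple_graph_edge_at[OF G e \<open>a \<in> e\<close>] by blast
    ultimately show ?thesis
      using edges unfolding signed_edge_def by auto
  qed
  then show "g ` e \<in> F" "e \<in> Sig \<longleftrightarrow> g ` e \<in> Lam" by auto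
qed

lemma signified_hom_extend_leaf:
  assumes G: "simple_graph V E" and Nx: "neighbours E x \<subseteq> {u}"
    and hom: "signified_hom (V - {x}) {e \<in> E. e \<subseteq> V - {x}} Sig W F Lam f"
    and "W \<noteq> {}" and walks: "has_signed_3_walks W F Lam"
  shows "\<exists>g. signified_hom V E Sig W F Lam g"
proof -
  obtain q where q: "q \<in> W"
    and xu: "u \<in> neighbours E x \<Longrightarrow> signed_edge F Lam q (f u) ({x, u} \<in> Sig)"
  proof (cases "u \<in> neighbours E x")
    case True
    then have "u \<in> V - {x}" using simple_graph_neighboursD[OF G] by blast
    then have "f u \<in> W" using hom unfolding signified_hom_def by blast
    then show thesis
      using that has_signed_3_walks_signed_edge[OF walks] signed_edge_commute by metis
  next
    case False
    with \<open>W \<noteq> {}\<close> that show thesis by blast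
  qed
  have "signified_hom V E Sig W F Lam (f(x := q))"
  proof (rule signified_hom_extend[OF G hom])
    fix a b assume "a \<in> {x}" "b \<in> neighbours E a"
    moreover from this have "b = u" "b \<noteq> x"
      using Nx simple_graph_neighboursD[OF G] by auto
    ultimately show "signed_edge F Lam ((f(x := q)) a) ((f(x := q)) b) ({a, b} \<in> Sig)"
      using xu by simp
  qed (use q in auto)
  then show ?thesis by blast
qed

lemma signified_hom_extend_edge:
  assumes G: "simple_graph V E" and "x \<noteq> y"
    and u: "u \<in> V - {x, y}" and w: "w \<in> V - {x, y}"
    and Nx: "neighbours E x \<subseteq> {y, u}" and Ny: "neighbours E y \<subseteq> {x, w}"
    and hom: "signified_hom (V - {x, y}) {e \<in> E. e \<subseteq> V - {x, y}} Sig W F Lam f"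
    and walks: "has_signed_3_walks W F Lam"
  shows "\<exists>g. signified_hom V E Sig W F Lam g"
proof -
  have "f u \<in> W" "f w \<in> W" using hom u w unfolding signified_hom_def by auto
  then obtain p q where "p \<in> W" "q \<in> W"
    and ux: "signed_edge F Lam (f u) p ({x, u} \<in> Sig)"
    and xy: "signed_edge F Lam p q ({x, y} \<in> Sig)"
    and yw: "signed_edge F Lam q (f w) ({y, w} \<in> Sig)"
    using walks unfolding has_signed_3_walks_def by blast
  let ?g = "f(x := p, y := q)"
  have "signified_hom V E Sig W F Lam ?g"
  proof (rule signified_hom_extend[OF G hom])
    fix a b assume "a \<in> {x, y}" "b \<in> neighbours E a"
    then consider "a = x" "b = y" | "a = x" "b = u" | "a = y" "b = x" | "a = y" "b = w"
      using Nx Ny by blast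
    then show "signed_edge F Lam (?g a) (?g b) ({a, b} \<in> Sig)"
      using \<open>x \<noteq> y\<close> u w ux xy yw by cases (auto simp: signed_edge_commute insert_commute)
  qed (use \<open>p \<in> W\<close> \<open>q \<in> W\<close> in auto)
  then show ?thesis by blast
qed

locale outerplanar_layout =
  fixes V :: "'a set" and E :: "'a set set" and pos :: "'a \<Rightarrow> nat"
  assumes simple: "simple_graph V E"
    and pos_inj: "inj_on pos V"
    and no_crossing: "{a, b} \<in> E \<Longrightarrow> {c, d} \<in> E \<Longrightarrow>
                        \<not> (pos a < pos c \<and> pos c < pos b \<and> pos b < pos d)"
begin

definition between :: "'a \<Rightarrow> 'a \<Rightarrow> 'a set" where
  "between p q = {v \<in> V. pos p < pos v \<and> pos v < pos q}"

lemma pos_eq_iff: "p \<in> V \<Longrightarrow> q \<in> V \<Longrightarrow> pos p = pos q \<longleftrightarrow> p = q"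
  using pos_inj by (auto dest: inj_onD)

lemma successor_unique:
  assumes "q \<in> V" "q' \<in> V" "pos p < pos q" "pos p < pos q'"
    and "between p q = {}" "between p q' = {}"
  shows "q = q'"
proof -
  have "\<not> pos q < pos q'" "\<not> pos q' < pos q"
    using assms unfolding between_def by blast+
  then show ?thesis using pos_eq_iff[OF assms(1,2)] by simp
qed

lemma edge_nested:
  assumes "{a, b} \<in> E" "s \<in> between a b" "{s, t} \<in> E"
  shows "pos a \<le> pos t \<and> pos t \<le> pos b"
proof -
  have "\<not> pos t < pos a"
    using no_crossing[of t s a b] assms unfolding between_def by (auto simp: insert_commute)
  moreover have "\<not> pos b < pos t"
    using no_crossing[of a b s t] assms unfolding between_def by auto
  ultimately show ?thesis by simp
qed

lemma long_edge_exists: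
  assumes "V \<noteq> {}" and min_degree: "\<forall>x\<in>V. \<forall>u. \<not> neighbours E x \<subseteq> {u}"
  shows "\<exists>a b. {a, b} \<in> E \<and> between a b \<noteq> {}"
proof -
  obtain v where v: "v \<in> V" and v_first: "\<And>x. x \<in> V \<Longrightarrow> pos v \<le> pos x"
    using ex_has_least_nat[of "\<lambda>x. x \<in> V" _ pos] assms(1) by blast
  obtain t t' where t: "{v, t} \<in> E" "{v, t'} \<in> E" "t \<noteq> t'"
    using min_degree v unfolding neighbours_def by blast
  have tV: "t \<in> V" "t' \<in> V" "v \<noteq> t" "v \<noteq> t'"
    using simple_graph_edgeD[OF simple t(1)] simple_graph_edgeD[OF simple t(2)] by auto
  then have "pos v < pos t" "pos v < pos t'" "pos t \<noteq> pos t'"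
    using v_first[of t] v_first[of t'] pos_eq_iff[OF v] pos_eq_iff[OF tV(1,2)] t(3)
    by (auto simp: order_less_le)
  then have "t \<in> between v t' \<or> t' \<in> between v t"
    using tV unfolding between_def by auto
  with t show ?thesis by blast
qed

end

locale minimal_long_edge = outerplanar_layout +
  fixes a b
  assumes long_edge: "{a, b} \<in> E" "between a b \<noteq> {}"
    and minimal: "\<And>c d. {c, d} \<in> E \<Longrightarrow> between c d \<noteq> {} \<Longrightarrow> pos b - pos a \<le> pos d - pos c"
begin

lemma inner_neighbour_consecutive:
  assumes s: "s \<in> between a b" and t: "t \<in> neighbours E s"
  shows "pos a \<le> pos t \<and> pos t \<le> pos b \<and> between s t = {} \<and> between t s = {}"
proof -
  have st: "{s, t} \<in> E" "{t, s} \<in> E"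
    using t unfolding neighbours_def by (auto simp: insert_commute)
  have range: "pos a \<le> pos t \<and> pos t \<le> pos b" using edge_nested[OF long_edge(1) s st(1)] .
  have "pos t - pos s < pos b - pos a" "pos s - pos t < pos b - pos a"
    using s range unfolding between_def by auto
  then have "between s t = {}" "between t s = {}"
    using minimal[OF st(1)] minimal[OF st(2)] by (auto simp: not_le[symmetric])
  with range show ?thesis by blast
qed

lemma first_inner_neighbours:
  assumes x: "x \<in> between a b" and x_first: "\<forall>s\<in>between a b. pos x \<le> pos s"
    and t: "t \<in> neighbours E x"
  shows "t = a \<or> (pos x < pos t \<and> between x t = {})"
proof -
  have tV: "t \<in> V" "t \<noteq> x" using simple_graph_neighboursD[OF simple t] by auto
  have aV: "a \<in> V" using simple_graph_edgeD[OF simple long_edge(1)] by blast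
  have consec: "pos a \<le> pos t" "pos t \<le> pos b" "between x t = {}"
    using inner_neighbour_consecutive[OF x t] by auto
  have "pos t \<noteq> pos x" using x tV pos_eq_iff unfolding between_def by auto
  moreover have "pos t = pos a" if "pos t < pos x"
  proof (rule ccontr)
    assume "pos t \<noteq> pos a"
    then have "t \<in> between a b" using that consec tV x unfolding between_def by auto
    with x_first that show False by fastforce
  qed
  ultimately show ?thesis using consec pos_eq_iff[OF tV(1) aV] by fastforce
qed

lemma second_inner_neighbours:
  assumes "x \<in> V" and y: "y \<in> between a b" and xy: "pos x < pos y" "between x y = {}"
    and t: "t \<in> neighbours E y" "t \<noteq> x"
  shows "pos y < pos t \<and> between y t = {}"
proof -
  have tV: "t \<in> V" "t \<noteq> y" using simple_graph_neighboursD[OF simple t(1)] by auto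
  have consec: "between y t = {}" "between t y = {}"
    using inner_neighbour_consecutive[OF y t(1)] by auto
  have "\<not> pos t < pos x" using consec(2) \<open>x \<in> V\<close> xy(1) unfolding between_def by blast
  moreover have "\<not> (pos x < pos t \<and> pos t < pos y)"
    using xy(2) tV(1) unfolding between_def by blast
  moreover have "pos t \<noteq> pos x" "pos t \<noteq> pos y"
    using pos_eq_iff tV \<open>x \<in> V\<close> y t(2) unfolding between_def by auto
  ultimately show ?thesis using consec(1) by auto
qed

lemma first_inner_edge:
  assumes tf: "triangle_free E" and min_degree: "\<forall>x\<in>V. \<forall>u. \<not> neighbours E x \<subseteq> {u}"
  obtains x y where "x \<in> V" "pos a < pos x" "y \<in> between a b" "{x, y} \<in> E"
    "pos x < pos y" "between x y = {}" "neighbours E x \<subseteq> {y, a}"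
proof -
  obtain x where x: "x \<in> between a b" and x_first: "\<forall>s\<in>between a b. pos x \<le> pos s"
    using ex_has_least_nat[of "\<lambda>s. s \<in> between a b" _ pos] long_edge(2) by blast
  have xV: "x \<in> V" and ax: "pos a < pos x" using x unfolding between_def by auto
  note x_nbrs = first_inner_neighbours[OF x x_first]
  obtain y where y: "y \<in> neighbours E x" "y \<noteq> a" using min_degree xV by blast
  then have xy: "pos x < pos y" "between x y = {}" using x_nbrs by blast+
  have yV: "y \<in> V" using simple_graph_neighboursD[OF simple y(1)] by blast
  have Nx: "neighbours E x \<subseteq> {y, a}"
  proof
    fix t assume t: "t \<in> neighbours E x"
    show "t \<in> {y, a}"
      using x_nbrs[OF t]
        successor_unique[OF simple_graph_neighboursD(1)[OF simple t] yV _ xy(1) _ xy(2)]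
      by blast
  qed
  then have "a \<in> neighbours E x" using min_degree xV by blast
  have "y \<noteq> b"
  proof
    assume "y = b"
    then have "{a, x} \<in> E" "{x, b} \<in> E"
      using \<open>a \<in> neighbours E x\<close> y(1) unfolding neighbours_def by (auto simp: insert_commute)
    with tf long_edge(1) show False unfolding triangle_free_def by blast
  qed
  then have "pos y < pos b"
    using inner_neighbour_consecutive[OF x y(1)] pos_eq_iff[OF yV]
      simple_graph_edgeD[OF simple long_edge(1)]
    by (auto simp: order_less_le)
  then have "y \<in> between a b" using yV ax xy(1) unfolding between_def by auto
  moreover have "{x, y} \<in> E" using y(1) unfolding neighbours_def by simp
  ultimately show thesis using that xV ax xy Nx by blast
qed

lemma reducible_edge:
  assumes tf: "triangle_free E" and min_degree: "\<forall>x\<in>V. \<forall>u. \<not> neighbours E x \<subseteq> {u}"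
  shows "\<exists>x y u w. {x, y} \<in> E \<and> u \<in> V - {x, y} \<and> w \<in> V - {x, y} \<and>
           neighbours E x \<subseteq> {y, u} \<and> neighbours E y \<subseteq> {x, w}"
proof -
  obtain x y where xV: "x \<in> V" and ax: "pos a < pos x" and y: "y \<in> between a b"
    and xy: "{x, y} \<in> E" "pos x < pos y" "between x y = {}" and Nx: "neighbours E x \<subseteq> {y, a}"
    using first_inner_edge[OF assms] by blast
  note y_nbrs = second_inner_neighbours[OF xV y xy(2,3)]
  have yV: "y \<in> V" using y unfolding between_def by blast
  obtain w where w: "w \<in> neighbours E y" "w \<noteq> x" using min_degree yV by blast
  have wV: "w \<in> V" "w \<noteq> y" using simple_graph_neighboursD[OF simple w(1)] by auto
  have Ny: "neighbours E y \<subseteq> {x, w}"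
  proof
    fix t assume t: "t \<in> neighbours E y"
    show "t \<in> {x, w}"
    proof (cases "t = x")
      case False
      with y_nbrs[OF t] y_nbrs[OF w] show ?thesis
        using successor_unique[OF simple_graph_neighboursD(1)[OF simple t] wV(1)] by blast
    qed simp
  qed
  have "a \<in> V - {x, y}"
    using simple_graph_edgeD[OF simple long_edge(1)] ax xy(2) by auto
  moreover have "w \<in> V - {x, y}" using wV w(2) by auto
  ultimately show ?thesis using xy(1) Nx Ny by blast
qed

end

lemma outerplanar_triangle_free_reducible:
  assumes G: "simple_graph V E" and "outerplanar V E" "triangle_free E" "V \<noteq> {}"
  shows "(\<exists>x\<in>V. \<exists>u. neighbours E x \<subseteq> {u}) \<or>
         (\<exists>x y u w. {x, y} \<in> E \<and> u \<in> V - {x, y} \<and> w \<in> V - {x, y} \<and>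
            neighbours E x \<subseteq> {y, u} \<and> neighbours E y \<subseteq> {x, w})"
proof (cases "\<exists>x\<in>V. \<exists>u. neighbours E x \<subseteq> {u}")
  case True
  then show ?thesis by blast
next
  case False
  then have min_degree: "\<forall>x\<in>V. \<forall>u. \<not> neighbours E x \<subseteq> {u}" by blast
  obtain pos :: "'a \<Rightarrow> nat" where "outerplanar_layout V E pos"
    using assms(2) G unfolding outerplanar_def outerplanar_layout_def by blast
  then interpret outerplanar_layout V E pos .
  let ?long = "\<lambda>p. {fst p, snd p} \<in> E \<and> between (fst p) (snd p) \<noteq> {}"
  obtain a b where "?long (a, b)"
    using long_edge_exists[OF assms(4)] min_degree by auto
  then obtain p where p: "?long p"
    and p_min: "\<And>q. ?long q \<Longrightarrow> pos (snd p) - pos (fst p) \<le> pos (snd q) - pos (fst q)"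
    using ex_has_least_nat[of ?long "(a, b)" "\<lambda>q. pos (snd q) - pos (fst q)"] by blast
  have "pos (snd p) - pos (fst p) \<le> pos d - pos c" if "{c, d} \<in> E" "between c d \<noteq> {}" for c d
    using p_min[of "(c, d)"] that by simp
  with p interpret minimal_long_edge V E pos "fst p" "snd p"
    by (unfold_locales; blast)
  show ?thesis using reducible_edge[OF assms(3) min_degree] by blast
qed

theorem outerplanar_triangle_free_signified_hom:
  assumes "simple_graph V E" "outerplanar V E" "triangle_free E"
    and "W \<noteq> {}" "has_signed_3_walks W F Lam"
  shows "\<exists>f. signified_hom V E Sig W F Lam f"
  using assms(1-3)
proof (induction "card V" arbitrary: V E rule: less_induct)
  case less
  have IH: "\<exists>f. signified_hom (V - X) {e \<in> E. e \<subseteq> V - X} Sig W F Lam f"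
    if "X \<subseteq> V" "X \<noteq> {}" for X
  proof (rule less.hyps)
    have "finite V" using less.prems(1) unfolding simple_graph_def by blast
    with that show "card (V - X) < card V" by (intro psubset_card_mono) auto
    show "simple_graph (V - X) {e \<in> E. e \<subseteq> V - X}"
      using simple_graph_induced[OF less.prems(1)] .
    show "outerplanar (V - X) {e \<in> E. e \<subseteq> V - X}"
      using outerplanar_induced[OF less.prems(2)] .
    show "triangle_free {e \<in> E. e \<subseteq> V - X}"
      by (rule triangle_free_subset[OF less.prems(3)]) auto
  qed
  consider "V = {}" | x u where "x \<in> V" "neighbours E x \<subseteq> {u}"
    | x y u w where "{x, y} \<in> E" "u \<in> V - {x, y}" "w \<in> V - {x, y}"
        "neighbours E x \<subseteq> {y, u}" "neighbours E y \<subseteq> {x, w}"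
    using outerplanar_triangle_free_reducible[OF less.prems] by blast
  then show ?case
  proof cases
    case 1
    then have "E = {}" using less.prems(1) unfolding simple_graph_def by auto
    with 1 show ?thesis unfolding signified_hom_def by simp
  next
    case (2 x u)
    then obtain f where "signified_hom (V - {x}) {e \<in> E. e \<subseteq> V - {x}} Sig W F Lam f"
      using IH[of "{x}"] by blast
    then show ?thesis
      using signified_hom_extend_leaf[OF less.prems(1) 2(2) _ assms(4,5)] by blast
  next
    case (3 x y u w)
    then obtain f where "signified_hom (V - {x, y}) {e \<in> E. e \<subseteq> V - {x, y}} Sig W F Lam f"
      using IH[of "{x, y}"] simple_graph_edgeD[OF less.prems(1)] by blast
    moreover have "x \<noteq> y" using simple_graph_edgeD[OF less.prems(1) 3(1)] by blast
    ultimately show ?thesis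
      using signified_hom_extend_edge[OF less.prems(1) _ 3(2-5) _ assms(5)] by blast
  qed
qed

definition has_3_walks_of_both_signs :: "'b set \<Rightarrow> 'b set set \<Rightarrow> 'b set set \<Rightarrow> bool" where
  "has_3_walks_of_both_signs W F Lam \<longleftrightarrow>
     (\<forall>p\<in>W. \<forall>q\<in>W. \<forall>s. \<exists>x\<in>W. \<exists>y\<in>W. {p, x} \<in> F \<and> {x, y} \<in> F \<and> {y, q} \<in> F \<and>
        ((({p, x} \<in> Lam) \<noteq> ({x, y} \<in> Lam)) \<noteq> ({y, q} \<in> Lam)) = s)"

lemma AT_edges_iff: "{(u, i), (v, j)} \<in> AT_edges F \<longleftrightarrow> {u, v} \<in> F"
proof
  assume "{(u, i), (v, j)} \<in> AT_edges F"
  then obtain u' v' i' j' where "{(u, i), (v, j)} = {(u', i'), (v', j')}" "{u', v'} \<in> F"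
    unfolding AT_edges_def by blast
  then show "{u, v} \<in> F" by (auto simp: doubleton_eq_iff insert_commute)
qed (auto simp: AT_edges_def)

lemma AT_neg_iff:
  "{(u, i), (v, j)} \<in> AT_neg F Lam \<longleftrightarrow> {u, v} \<in> F \<and> ({u, v} \<in> Lam) \<noteq> (i \<noteq> j)"
proof
  assume "{(u, i), (v, j)} \<in> AT_neg F Lam"
  then obtain u' v' i' j' where "{(u, i), (v, j)} = {(u', i'), (v', j')}" "{u', v'} \<in> F"
    "({u', v'} \<in> Lam) \<noteq> (i' \<noteq> j')"
    unfolding AT_neg_def by auto
  then show "{u, v} \<in> F \<and> ({u, v} \<in> Lam) \<noteq> (i \<noteq> j)"
    by (auto simp: doubleton_eq_iff insert_commute)
next
  assume "{u, v} \<in> F \<and> ({u, v} \<in> Lam) \<noteq> (i \<noteq> j)"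
  then show "{(u, i), (v, j)} \<in> AT_neg F Lam"
    unfolding AT_neg_def by auto
qed

lemma AT_signed_edge_iff:
  "signed_edge (AT_edges F) (AT_neg F Lam) (u, i) (v, j) s \<longleftrightarrow>
     {u, v} \<in> F \<and> (({u, v} \<in> Lam) \<noteq> (i \<noteq> j)) = s"
  unfolding signed_edge_def AT_edges_iff AT_neg_iff by (cases "{u, v} \<in> F") simp_all

lemma AT_has_signed_3_walks:
  assumes "has_3_walks_of_both_signs W F Lam"
  shows "has_signed_3_walks (AT_vertices W) (AT_edges F) (AT_neg F Lam)"
  unfolding has_signed_3_walks_def
proof (intro ballI allI)
  fix p q and s1 s2 s3 :: bool
  assume "p \<in> AT_vertices W" "q \<in> AT_vertices W"
  then obtain a i b j where p: "p = (a, i)" "a \<in> W" and q: "q = (b, j)" "b \<in> W"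
    unfolding AT_vertices_def by auto
  \<comment> \<open>The layers of x and y realise s1 and s2 (a layer change flips both edges at a vertex);
    the walk in H is chosen so that the last edge then gets sign s3.\<close>
  obtain x y where xy: "x \<in> W" "y \<in> W" "{a, x} \<in> F" "{x, y} \<in> F" "{y, b} \<in> F"
    and sign: "((({a, x} \<in> Lam) \<noteq> ({x, y} \<in> Lam)) \<noteq> ({y, b} \<in> Lam)) =
                 ((i \<noteq> j) \<noteq> ((s1 \<noteq> s2) \<noteq> s3))"
    using assms[unfolded has_3_walks_of_both_signs_def, rule_format, OF \<open>a \<in> W\<close> \<open>b \<in> W\<close>,
        of "(i \<noteq> j) \<noteq> ((s1 \<noteq> s2) \<noteq> s3)"]
    by (elim bexE conjE) (rule that)
  define i1 where "i1 = (i \<noteq> (({a, x} \<in> Lam) \<noteq> s1))"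
  define i2 where "i2 = (i1 \<noteq> (({x, y} \<in> Lam) \<noteq> s2))"
  have "signed_edge (AT_edges F) (AT_neg F Lam) p (x, i1) s1 \<and>
        signed_edge (AT_edges F) (AT_neg F Lam) (x, i1) (y, i2) s2 \<and>
        signed_edge (AT_edges F) (AT_neg F Lam) (y, i2) q s3"
    unfolding p q AT_signed_edge_iff i1_def i2_def using xy(3-5) sign by argo
  moreover have "(x, i1) \<in> AT_vertices W" "(y, i2) \<in> AT_vertices W"
    using xy unfolding AT_vertices_def by auto
  ultimately show "\<exists>x'\<in>AT_vertices W. \<exists>y'\<in>AT_vertices W.
      signed_edge (AT_edges F) (AT_neg F Lam) p x' s1 \<and>
      signed_edge (AT_edges F) (AT_neg F Lam) x' y' s2 \<and>
      signed_edge (AT_edges F) (AT_neg F Lam) y' q s3"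
    by blast
qed

lemma K4_edges_iff: "{u, v} \<in> K4_edges \<longleftrightarrow> u \<in> K4_vertices \<and> v \<in> K4_vertices \<and> u \<noteq> v"
  unfolding K4_edges_def by (auto simp: doubleton_eq_iff)

lemma K4_star_has_3_walks_of_both_signs: "has_3_walks_of_both_signs K4_vertices K4_edges K4_neg"
  unfolding has_3_walks_of_both_signs_def K4_edges_iff all_bool_eq K4_vertices_def K4_neg_def
  by (intro ballI conjI; elim insertE emptyE; simp add: doubleton_eq_iff)

theorem mainTheorem11:
  fixes V :: "'a set" and E Sig :: "'a set set"
  assumes "signified_graph V E Sig"
    and "outerplanar V E"
    and "girth_at_least V E 4"
  shows "\<exists>f. signified_hom V E Sig
                (AT_vertices K4_vertices) (AT_edges K4_edges) (AT_neg K4_edges K4_neg) f"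
proof -
  have G: "simple_graph V E" using assms(1) unfolding signified_graph_def by blast
  show ?thesis
  proof (rule outerplanar_triangle_free_signified_hom[OF G assms(2)])
    show "triangle_free E" using girth_at_least_4_triangle_free[OF G assms(3)] .
    show "AT_vertices K4_vertices \<noteq> {}" unfolding AT_vertices_def K4_vertices_def by simp
    show "has_signed_3_walks (AT_vertices K4_vertices) (AT_edges K4_edges) (AT_neg K4_edges K4_neg)"
      using AT_has_signed_3_walks[OF K4_star_has_3_walks_of_both_signs] .
  qed
qed

end
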